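(* Let $(T,\sigma)$ be a confluent temperature-1 tile assembly system. If the binding graph of an assembly path $\alpha$ is an ultimately periodic path $(0,0).mp^{\omega}$ (with $m,p$ finite free words, $p\neq\epsilon$), then $\alpha$ is an ultimately periodic assembly path, i.e. there are finite words $m',p'$ with $p'\ne\epsilon$ such that the binding graph of $\alpha$ is $(0,0).m'p'^{\omega}$ and $\alpha(\vec{m'}+i\vec{p'}+\vec q)=\alpha(\vec{m'}+\vec q)$ for all $i\ge 0$ and all prefixes $q$ of $p'$.
   Context: Directions $D=\{E=(1,0),N=(0,1),S=(0,-1),W=(-1,0)\}$; $\mathbb Z^2$ is the grid graph. A free path is a word over $D$ whose associated walk is simple. For a point $A$ and a free path $m$, $A.m$ is the path starting at $A$ and following the letters of $m$; for finite $m$, $\vec m$ is the sum of its letters. For finite $p\neq\epsilon$, $p^\omega=ppp\cdots$. A path $A.mp^\omega$ ($m,p$ finite, $p\ne\epsilon$) is ultimately periodic. Tile assembly: $\Sigma$ is a finite glue alphabet; a tile type is a map $t:D\to\Sigma$, written $d\mapsto t_d$. A temperature-1 tile assembly system (TAS) is a pair $(T,\sigma)$ with $T$ a finite set of tile types and $\sigma$ a tile type (the seed). An assembly is a partial map $\alpha:\mathbb Z^2\to T\cup\{\sigma\}$ (if $\sigma\notin T$, $\sigma$ is used at most once). Its binding graph has vertex set $\mathrm{Dom}(\alpha)$ and an edge between $v$ and $v+d$ ($d\in D$) iff $\alpha(v)_d=\alpha(v+d)_{-d}$. $\alpha$ is stable if its binding graph is connected, and producible if it is stable and $\alpha((0,0))=\sigma$.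 The TAS is confluent if any two producible assemblies agree on the intersection of their domains. An assembly path is a producible assembly whose binding graph is a path starting at $(0,0)$. *)

theory Defs
  imports Main "HOL-Library.Sublist"
begin

datatype dir = E | N | S | W

type_synonym point = "int \<times> int"

fun dvec :: "dir \<Rightarrow> point" where
  "dvec E = (1, 0)" | "dvec N = (0, 1)" | "dvec S = (0, -1)" | "dvec W = (-1, 0)"

fun opp :: "dir \<Rightarrow> dir" where
  "opp E = W" | "opp W = E" | "opp N = S" | "opp S = N"

definition padd :: "point \<Rightarrow> point \<Rightarrow> point" where
  "padd u v = (fst u + fst v, snd u + snd v)"

definition pscale :: "int \<Rightarrow> point \<Rightarrow> point" where
  "pscale k u = (k * fst u, k * snd u)"

fun wvec :: "dir list \<Rightarrow> point" where
  "wvec [] = (0, 0)" | "wvec (d # m) = padd (dvec d) (wvec m)"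

text \<open>Infinite words are maps \<open>nat \<Rightarrow> dir\<close>; \<open>m p\<^sup>\<omega>\<close> for finite \<open>m, p\<close> (\<open>p \<noteq> []\<close>).\<close>
definition ultper :: "dir list \<Rightarrow> dir list \<Rightarrow> (nat \<Rightarrow> dir)" where
  "ultper m p = (\<lambda>n. if n < length m then m ! n else p ! ((n - length m) mod length p))"

fun walkpos :: "(nat \<Rightarrow> dir) \<Rightarrow> nat \<Rightarrow> point" where
  "walkpos w 0 = (0, 0)" | "walkpos w (Suc n) = padd (walkpos w n) (dvec (w n))"

type_synonym 'g tile = "dir \<Rightarrow> 'g"
type_synonym 'g assembly = "point \<Rightarrow> 'g tile option"

definition is_assembly :: "'g tile set \<Rightarrow> 'g tile \<Rightarrow> 'g assembly \<Rightarrow> bool" where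
  "is_assembly T \<sigma> \<alpha> \<longleftrightarrow> ran \<alpha> \<subseteq> insert \<sigma> T \<and>
     (\<sigma> \<notin> T \<longrightarrow> (\<forall>u v. \<alpha> u = Some \<sigma> \<and> \<alpha> v = Some \<sigma> \<longrightarrow> u = v))"

text \<open>Edge of the binding graph between \<open>u\<close> and \<open>u + d\<close>.\<close>
definition bond :: "'g assembly \<Rightarrow> point \<Rightarrow> dir \<Rightarrow> bool" where
  "bond \<alpha> u d \<longleftrightarrow> (\<exists>t t'. \<alpha> u = Some t \<and> \<alpha> (padd u (dvec d)) = Some t' \<and> t d = t' (opp d))"

definition bgraph_adj :: "'g assembly \<Rightarrow> point \<Rightarrow> point \<Rightarrow> bool" where
  "bgraph_adj \<alpha> u v \<longleftrightarrow> (\<exists>d. v = padd u (dvec d) \<and> bond \<alpha> u d)"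

definition stable :: "'g assembly \<Rightarrow> bool" where
  "stable \<alpha> \<longleftrightarrow> (\<forall>u\<in>dom \<alpha>. \<forall>v\<in>dom \<alpha>. (u, v) \<in> {(x, y). bgraph_adj \<alpha> x y}\<^sup>*)"

definition producible :: "'g tile set \<Rightarrow> 'g tile \<Rightarrow> 'g assembly \<Rightarrow> bool" where
  "producible T \<sigma> \<alpha> \<longleftrightarrow> is_assembly T \<sigma> \<alpha> \<and> stable \<alpha> \<and> \<alpha> (0, 0) = Some \<sigma>"

definition confluent :: "'g tile set \<Rightarrow> 'g tile \<Rightarrow> bool" where
  "confluent T \<sigma> \<longleftrightarrow> (\<forall>\<alpha> \<beta>. producible T \<sigma> \<alpha> \<and> producible T \<sigma> \<beta> \<longrightarrow>
      (\<forall>u \<in> dom \<alpha> \<inter> dom \<beta>. \<alpha> u = \<beta> u))"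

definition bgraph_is_path :: "'g assembly \<Rightarrow> (nat \<Rightarrow> dir) \<Rightarrow> bool" where
  "bgraph_is_path \<alpha> w \<longleftrightarrow> inj (walkpos w) \<and> dom \<alpha> = range (walkpos w) \<and>
     (\<forall>u d. bond \<alpha> u d \<longleftrightarrow>
        (\<exists>n. {walkpos w n, walkpos w (Suc n)} = {u, padd u (dvec d)}))"

end

theory Submission
  imports Defs "HOL-Library.Product_Plus"
begin

text \<open>Among the tiles at the positions reached after \<open>m p\<^sup>k\<close>, \<open>k = 0, 1, \<dots>\<close>, two coincide,
  say at indices \<open>a\<close> and \<open>a + L\<close>. Pumping the segment between them yields another path
  assembly along the same walk, which is producible; by confluence it agrees with \<open>\<alpha>\<close>,
  so the tiles of \<open>\<alpha>\<close> repeat with period \<open>L\<close> from index \<open>a\<close> on.\<close>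

lemma padd_eq_plus: "padd u v = u + v"
  by (simp add: padd_def prod_eq_iff)

lemma pscale_0: "pscale 0 u = 0"
  by (simp add: pscale_def prod_eq_iff)

lemma pscale_1: "pscale 1 u = u"
  by (simp add: pscale_def)

lemma pscale_add: "pscale (k + l) u = pscale k u + pscale l u"
  by (simp add: pscale_def prod_eq_iff algebra_simps)

lemma wvec_append: "wvec (xs @ ys) = wvec xs + wvec ys"
  by (induction xs) (auto simp: padd_eq_plus add.assoc prod_eq_iff)

lemma walkpos_add: "walkpos w (a + k) = walkpos w a + wvec (map (\<lambda>t. w (a + t)) [0..<k])"
  by (induction k) (auto simp: padd_eq_plus wvec_append prod_eq_iff)

lemma opp_opp [simp]: "opp (opp d) = d"
  by (cases d) auto

lemma padd_dvec_opp [simp]: "padd (padd u (dvec d)) (dvec (opp d)) = u"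
  by (cases d) (auto simp: padd_def)

lemma periodic_from_mult:
  fixes f :: "nat \<Rightarrow> 'a"
  assumes periodic: "\<And>x. a \<le> x \<Longrightarrow> f (x + L) = f x" and "a \<le> x"
  shows "f (x + k * L) = f x"
proof (induction k)
  case (Suc k)
  have "f (x + Suc k * L) = f ((x + k * L) + L)" by (simp add: add_ac)
  also have "\<dots> = f x" using periodic \<open>a \<le> x\<close> Suc by simp
  finally show ?case .
qed simp

lemma ultper_periodic:
  assumes "length m \<le> x"
  shows "ultper m p (x + length p) = ultper m p x"
proof -
  have "x + length p - length m = (x - length m) + length p" using assms by simp
  then have "(x + length p - length m) mod length p = (x - length m) mod length p"
    by (metis mod_add_self2)
  then show ?thesis using assms by (simp add: ultper_def)
qed

lemma ultper_eq_periodic: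
  assumes "0 < L" and periodic: "\<And>x. a \<le> x \<Longrightarrow> w (x + L) = w x"
  shows "ultper (map w [0..<a]) (map (\<lambda>t. w (a + t)) [0..<L]) = w"
proof
  fix n
  show "ultper (map w [0..<a]) (map (\<lambda>t. w (a + t)) [0..<L]) n = w n"
  proof (cases "n < a")
    case False
    have "ultper (map w [0..<a]) (map (\<lambda>t. w (a + t)) [0..<L]) n = w (a + (n - a) mod L)"
      using False \<open>0 < L\<close> by (simp add: ultper_def)
    also have "\<dots> = w (a + (n - a) mod L + (n - a) div L * L)"
      by (rule periodic_from_mult[where f = w and a = a and L = L, OF periodic le_add1, symmetric])
    also have "a + (n - a) mod L + (n - a) div L * L = n"
      using False by simp
    finally show ?thesis .
  qed (simp add: ultper_def)
qed

lemma walkpos_periodic_from: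
  fixes w :: "nat \<Rightarrow> dir"
  assumes periodic: "\<And>x. a \<le> x \<Longrightarrow> w (x + L) = w x" and "a \<le> x"
  shows "walkpos w (x + k * L) = walkpos w x + pscale (int k) (walkpos w (a + L) - walkpos w a)"
proof -
  have shift: "walkpos w (y + L) = walkpos w y + (walkpos w (a + L) - walkpos w a)"
    if "a \<le> y" for y
    using that
  proof (induction y rule: dec_induct)
    case (step y)
    with periodic[of y] show ?case by (simp add: padd_eq_plus algebra_simps)
  qed simp
  show ?thesis
  proof (induction k)
    case (Suc k)
    have "x + Suc k * L = (x + k * L) + L" by simp
    with Suc shift[of "x + k * L"] \<open>a \<le> x\<close> show ?case
      by (simp add: pscale_add pscale_1 algebra_simps)
  qed (simp add: pscale_0)
qed

lemma stable_if_bonds_along_walk: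
  assumes dom: "dom \<gamma> = range (walkpos w)" and bonds: "\<And>n. bond \<gamma> (walkpos w n) (w n)"
  shows "stable \<gamma>"
proof -
  define R where "R = {(x, y). bgraph_adj \<gamma> x y}"
  have adj: "(walkpos w n, walkpos w (Suc n)) \<in> R \<and> (walkpos w (Suc n), walkpos w n) \<in> R" for n
  proof -
    have reverse_bond: "bond \<gamma> (walkpos w (Suc n)) (opp (w n))"
      using bonds[of n] by (auto simp: bond_def)
    have "bgraph_adj \<gamma> (walkpos w n) (walkpos w (Suc n))"
      unfolding bgraph_adj_def using bonds[of n] by auto
    moreover have "bgraph_adj \<gamma> (walkpos w (Suc n)) (walkpos w n)"
      unfolding bgraph_adj_def using reverse_bond by (intro exI[of _ "opp (w n)"]) simp
    ultimately show ?thesis by (simp add: R_def)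
  qed
  have "(walkpos w 0, walkpos w n) \<in> R\<^sup>* \<and> (walkpos w n, walkpos w 0) \<in> R\<^sup>*" for n
  proof (induction n)
    case (Suc n)
    with adj[of n] show ?case by (meson converse_rtrancl_into_rtrancl rtrancl_into_rtrancl)
  qed simp
  then show ?thesis
    unfolding stable_def R_def[symmetric] dom by (auto intro: rtrancl_trans)
qed

definition path_assembly :: "(nat \<Rightarrow> dir) \<Rightarrow> (nat \<Rightarrow> 'g tile option) \<Rightarrow> 'g assembly" where
  "path_assembly w g u = (if u \<in> range (walkpos w) then g (inv (walkpos w) u) else None)"

lemma path_assembly_walkpos:
  "inj (walkpos w) \<Longrightarrow> path_assembly w g (walkpos w n) = g n"
  by (simp add: path_assembly_def)

lemma producible_path_assembly:
  assumes inj: "inj (walkpos w)"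
    and bonds: "\<And>n. \<exists>t t'. g n = Some t \<and> g (Suc n) = Some t' \<and> t (w n) = t' (opp (w n))"
    and tiles: "\<And>n. g n \<in> Some ` insert \<sigma> T"
    and seed: "g 0 = Some \<sigma>"
    and seed_unique: "\<And>n. \<sigma> \<notin> T \<Longrightarrow> g n = Some \<sigma> \<Longrightarrow> n = 0"
  shows "producible T \<sigma> (path_assembly w g)"
proof -
  let ?\<gamma> = "path_assembly w g"
  have at_walk: "?\<gamma> (walkpos w n) = g n" for n
    using path_assembly_walkpos[OF inj] .
  have off_walk: "u \<notin> range (walkpos w) \<Longrightarrow> ?\<gamma> u = None" for u
    by (simp add: path_assembly_def)
  have on_walk: "\<exists>n. u = walkpos w n \<and> g n = Some t" if "?\<gamma> u = Some t" for u t
    using that at_walk off_walk by (metis imageE option.distinct(1))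
  have dom: "dom ?\<gamma> = range (walkpos w)"
  proof
    show "dom ?\<gamma> \<subseteq> range (walkpos w)" using on_walk by blast
    show "range (walkpos w) \<subseteq> dom ?\<gamma>" using at_walk tiles by (force simp: dom_def)
  qed
  have "bond ?\<gamma> (walkpos w n) (w n)" for n
  proof -
    have "padd (walkpos w n) (dvec (w n)) = walkpos w (Suc n)" by simp
    then show ?thesis using bonds[of n] by (simp only: bond_def at_walk)
  qed
  then have "stable ?\<gamma>"
    using stable_if_bonds_along_walk[OF dom] by blast
  moreover have "is_assembly T \<sigma> ?\<gamma>"
    unfolding is_assembly_def
  proof
    show "ran ?\<gamma> \<subseteq> insert \<sigma> T"
    proof
      fix t assume "t \<in> ran ?\<gamma>"
      then obtain u where "?\<gamma> u = Some t" by (auto simp: ran_def)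
      then obtain n where "g n = Some t" using on_walk by blast
      then show "t \<in> insert \<sigma> T" using tiles[of n] by auto
    qed
    show "\<sigma> \<notin> T \<longrightarrow> (\<forall>u v. ?\<gamma> u = Some \<sigma> \<and> ?\<gamma> v = Some \<sigma> \<longrightarrow> u = v)"
      using on_walk seed_unique by metis
  qed
  moreover have "?\<gamma> (0, 0) = Some \<sigma>"
    using at_walk[of 0] seed by simp
  ultimately show ?thesis
    by (simp add: producible_def)
qed

lemma bond_along_path:
  assumes "bgraph_is_path \<alpha> w"
  shows "bond \<alpha> (walkpos w n) (w n)"
proof -
  have "walkpos w (Suc n) = padd (walkpos w n) (dvec (w n))" by simp
  then show ?thesis using assms unfolding bgraph_is_path_def by metis
qed

lemma confluent_path_tiles_periodic:
  assumes "confluent T \<sigma>" and "producible T \<sigma> \<alpha>" and path: "bgraph_is_path \<alpha> w"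
    and periodic: "\<And>x. a \<le> x \<Longrightarrow> w (x + L) = w x"
    and repeat: "\<alpha> (walkpos w (a + L)) = \<alpha> (walkpos w a)"
    and "a \<le> x"
  shows "\<alpha> (walkpos w (x + L)) = \<alpha> (walkpos w x)"
proof -
  have inj: "inj (walkpos w)" and dom: "dom \<alpha> = range (walkpos w)"
    using path unfolding bgraph_is_path_def by auto
  note bonds = bond_along_path[OF path]
  \<comment> \<open>\<open>\<alpha>\<close> up to index \<open>a + L\<close>, then the segment \<open>[a, a + L]\<close> repeated forever\<close>
  define g where "g n = \<alpha> (walkpos w (if n \<le> a + L then n else n - L))" for n
  have g_late: "g n = \<alpha> (walkpos w (n - L))" if "a + L \<le> n" for n
    using that repeat by (cases "n = a + L") (auto simp: g_def)
  have \<alpha>_tiles: "\<alpha> (walkpos w k) \<in> Some ` insert \<sigma> T" for k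
  proof -
    obtain t where t: "\<alpha> (walkpos w k) = Some t"
      using dom by blast
    then have "t \<in> ran \<alpha>" by (rule ranI)
    with t show ?thesis
      using \<open>producible T \<sigma> \<alpha>\<close> by (auto simp: producible_def is_assembly_def)
  qed
  have g_tiles: "g n \<in> Some ` insert \<sigma> T" for n
    unfolding g_def by (rule \<alpha>_tiles)
  have "producible T \<sigma> (path_assembly w g)"
  proof (rule producible_path_assembly[OF inj _ g_tiles])
    show "\<exists>t t'. g n = Some t \<and> g (Suc n) = Some t' \<and> t (w n) = t' (opp (w n))" for n
    proof (cases "n < a + L")
      case True
      then show ?thesis using bonds[of n] by (simp add: g_def bond_def)
    next
      case False
      then have "w n = w (n - L)" using periodic[of "n - L"] by simp
      moreover have "Suc n - L = Suc (n - L)" using False by simp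
      ultimately show ?thesis using bonds[of "n - L"] False g_late[of n] g_late[of "Suc n"]
        by (simp add: bond_def)
    qed
    show "g 0 = Some \<sigma>"
      using \<open>producible T \<sigma> \<alpha>\<close> by (simp add: g_def producible_def)
    show "n = 0" if "\<sigma> \<notin> T" and "g n = Some \<sigma>" for n
    proof -
      let ?k = "if n \<le> a + L then n else n - L"
      have "\<alpha> (walkpos w ?k) = Some \<sigma>" and "\<alpha> (walkpos w 0) = Some \<sigma>"
        using that(2) \<open>producible T \<sigma> \<alpha>\<close> by (simp_all add: g_def producible_def)
      then have "walkpos w ?k = walkpos w 0"
        using that(1) \<open>producible T \<sigma> \<alpha>\<close> unfolding producible_def is_assembly_def by blast
      then have "?k = 0" by (rule injD[OF inj])
      then show "n = 0" by (simp split: if_splits)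
    qed
  qed
  have "\<alpha> (walkpos w n) = g n" for n
  proof -
    have "walkpos w n \<in> dom \<alpha> \<inter> dom (path_assembly w g)"
      using dom g_tiles[of n] by (auto simp: path_assembly_walkpos[OF inj])
    then have "\<alpha> (walkpos w n) = path_assembly w g (walkpos w n)"
      using assms(1,2) \<open>producible T \<sigma> (path_assembly w g)\<close> unfolding confluent_def by blast
    then show ?thesis by (simp add: path_assembly_walkpos[OF inj])
  qed
  then show ?thesis
    using g_late[of "x + L"] \<open>a \<le> x\<close> by simp
qed

lemma ultimately_periodic_assembly_pathI:
  assumes path: "bgraph_is_path \<alpha> w" and "0 < L"
    and periodic: "\<And>x. a \<le> x \<Longrightarrow> w (x + L) = w x"
    and tiles_periodic: "\<And>x. a \<le> x \<Longrightarrow> \<alpha> (walkpos w (x + L)) = \<alpha> (walkpos w x)"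
  shows "\<exists>m' p'. p' \<noteq> [] \<and> bgraph_is_path \<alpha> (ultper m' p') \<and>
     (\<forall>i::nat. \<forall>q. prefix q p' \<longrightarrow>
        \<alpha> (padd (padd (wvec m') (pscale (int i) (wvec p'))) (wvec q)) = \<alpha> (padd (wvec m') (wvec q)))"
proof -
  define m' where "m' = map w [0..<a]"
  define p' where "p' = map (\<lambda>t. w (a + t)) [0..<L]"
  have "p' \<noteq> []"
    using \<open>0 < L\<close> by (simp add: p'_def)
  moreover have "bgraph_is_path \<alpha> (ultper m' p')"
    using path ultper_eq_periodic[where w = w and a = a, OF \<open>0 < L\<close> periodic]
    by (simp add: m'_def p'_def)
  moreover have "\<alpha> (padd (padd (wvec m') (pscale (int i) (wvec p'))) (wvec q)) = \<alpha> (padd (wvec m') (wvec q))"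
    if "prefix q p'" for i :: nat and q
  proof -
    have "length q \<le> L"
      using prefix_length_le[OF that] by (simp add: p'_def)
    have "q = take (length q) p'"
      using that by (metis append_eq_conv_conj prefixE)
    also have "\<dots> = map (\<lambda>t. w (a + t)) [0..<length q]"
      using \<open>length q \<le> L\<close> by (simp add: p'_def take_map)
    finally obtain k where q: "q = map (\<lambda>t. w (a + t)) [0..<k]"
      by blast
    have m'_vec: "wvec m' = walkpos w a"
      using walkpos_add[of w 0 a] by (simp add: m'_def zero_prod_def)
    have p'_vec: "wvec p' = walkpos w (a + L) - walkpos w a"
      using walkpos_add[of w a L] by (simp add: p'_def)
    have q_vec: "wvec q = walkpos w (a + k) - walkpos w a"
      using walkpos_add[of w a k] by (simp add: q)
    have "padd (padd (wvec m') (pscale (int i) (wvec p'))) (wvec q)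
        = walkpos w (a + k) + pscale (int i) (walkpos w (a + L) - walkpos w a)"
      by (simp add: padd_eq_plus m'_vec p'_vec q_vec)
    also have "\<dots> = walkpos w (a + k + i * L)"
      using walkpos_periodic_from[where w = w and a = a and L = L, OF periodic, of "a + k" i]
      by simp
    finally have "\<alpha> (padd (padd (wvec m') (pscale (int i) (wvec p'))) (wvec q)) = \<alpha> (walkpos w (a + k))"
      using periodic_from_mult[where f = "\<lambda>n. \<alpha> (walkpos w n)" and a = a and L = L,
          OF tiles_periodic, of "a + k" i] by simp
    also have "walkpos w (a + k) = padd (wvec m') (wvec q)"
      by (simp add: padd_eq_plus m'_vec q_vec)
    finally show ?thesis .
  qed
  ultimately show ?thesis
    by blast
qed

lemma finite_range_repeats:
  fixes f :: "nat \<Rightarrow> 'a"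
  assumes "finite (range f)"
  obtains i j where "i < j" and "f i = f j"
proof -
  have "\<not> inj f"
    using assms finite_imageD by blast
  then obtain i j where "f i = f j" and "i \<noteq> j"
    unfolding inj_def by blast
  then show thesis
    using that by (metis linorder_neqE_nat)
qed

theorem mainTheorem2:
  fixes T :: "'g tile set" and \<sigma> :: "'g tile" and \<alpha> :: "'g assembly"
    and m p :: "dir list"
  assumes "finite T"
    and "confluent T \<sigma>"
    and "producible T \<sigma> \<alpha>"
    and "p \<noteq> []"
    and "bgraph_is_path \<alpha> (ultper m p)"
  shows "\<exists>m' p'. p' \<noteq> [] \<and> bgraph_is_path \<alpha> (ultper m' p') \<and>
     (\<forall>i::nat. \<forall>q. prefix q p' \<longrightarrow>
        \<alpha> (padd (padd (wvec m') (pscale (int i) (wvec p'))) (wvec q)) = \<alpha> (padd (wvec m') (wvec q)))"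
proof -
  let ?w = "ultper m p"
  let ?f = "\<lambda>k. \<alpha> (walkpos ?w (length m + k * length p))"
  have "range ?f \<subseteq> insert None (Some ` insert \<sigma> T)"
    using \<open>producible T \<sigma> \<alpha>\<close> by (auto simp: producible_def is_assembly_def intro: ranI)
  then have "finite (range ?f)"
    by (rule finite_subset) (simp add: \<open>finite T\<close>)
  then obtain i j where "i < j" and repeat: "?f i = ?f j"
    by (rule finite_range_repeats)
  define a where "a = length m + i * length p"
  define L where "L = (j - i) * length p"
  have "0 < L" and "a + L = length m + j * length p"
    using \<open>i < j\<close> \<open>p \<noteq> []\<close> by (simp_all add: a_def L_def diff_mult_distrib)
  have periodic: "?w (x + L) = ?w x" if "a \<le> x" for x
    using periodic_from_mult[where f = ?w and a = "length m" and L = "length p" and x = x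
        and k = "j - i", OF ultper_periodic] that
    by (simp add: a_def L_def)
  have repeat_at_period: "\<alpha> (walkpos ?w (a + L)) = \<alpha> (walkpos ?w a)"
    using repeat by (simp only: \<open>a + L = length m + j * length p\<close>) (simp add: a_def)
  have tiles_periodic: "\<alpha> (walkpos ?w (x + L)) = \<alpha> (walkpos ?w x)" if "a \<le> x" for x
    using confluent_path_tiles_periodic[OF assms(2,3,5) periodic repeat_at_period that] .
  show ?thesis
    by (rule ultimately_periodic_assembly_pathI[OF assms(5) \<open>0 < L\<close> periodic tiles_periodic])
qed

end
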